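(* Let $K\subseteq\mathbb{R}^n$ be a nonempty compact set, let $\mathbf{c}\in\mathbb{Z}^n$, $F:=F_K(\mathbf{c})$, and assume $h_K(\mathbf{c})\in\mathbb{Z}$. Let $\mathbf{a}_1,\dots,\mathbf{a}_k\in\mathbb{Z}^n$. Then there exist integers $n_1,\dots,n_k\ge0$ such that $$\mathrm{CG}\big(K,(\mathbf{a}_1+n_1\mathbf{c},\dots,\mathbf{a}_k+n_k\mathbf{c})\big)\cap H^=_K(\mathbf{c})=\mathrm{CG}\big(F,(\mathbf{a}_1,\dots,\mathbf{a}_k)\big).$$
   Context: $h_K(\mathbf{a})=\sup_{\mathbf{x}\in K}\mathbf{a}\mathbf{x}$, with $h_\emptyset\equiv-\infty$. For nonempty compact $K$: $H^=_K(\mathbf{a}):=\{\mathbf{x}:\mathbf{a}\mathbf{x}=h_K(\mathbf{a})\}$ and $F_K(\mathbf{a}):=K\cap H^=_K(\mathbf{a})$. For $\mathbf{a}\in\mathbb{Z}^n$, $\mathrm{CG}(K,\mathbf{a}):=K\cap\{\mathbf{x}:\mathbf{a}\mathbf{x}\le\lfloor h_K(\mathbf{a})\rfloor\}$; for a list, $\mathrm{CG}(K,(\mathbf{a}_1,\dots,\mathbf{a}_k)):=\mathrm{CG}(\mathrm{CG}(K,\mathbf{a}_1),(\mathbf{a}_2,\dots,\mathbf{a}_k))$ and $\mathrm{CG}(K,\emptyset)=K$. *)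

theory Defs
  imports "HOL-Analysis.Analysis"
begin

text \<open>Support function h_K(a) = sup over x in K of a.x (only used for nonempty compact K,
  or inside an intersection with K, so the value at the empty set is irrelevant).\<close>
definition supp_fun :: "(real^'n) set \<Rightarrow> real^'n \<Rightarrow> real" where
  "supp_fun K a = Sup ((\<lambda>x. a \<bullet> x) ` K)"

definition Heq :: "(real^'n) set \<Rightarrow> real^'n \<Rightarrow> (real^'n) set" where
  "Heq K a = {x. a \<bullet> x = supp_fun K a}"

definition face :: "(real^'n) set \<Rightarrow> real^'n \<Rightarrow> (real^'n) set" where
  "face K a = K \<inter> Heq K a"

definition int_vec :: "real^'n \<Rightarrow> bool" where
  "int_vec a \<longleftrightarrow> (\<forall>i. a $ i \<in> \<int>)"

definition CG :: "(real^'n) set \<Rightarrow> real^'n \<Rightarrow> (real^'n) set" where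
  "CG K a = K \<inter> {x. a \<bullet> x \<le> of_int \<lfloor>supp_fun K a\<rfloor>}"

fun CG_list :: "(real^'n) set \<Rightarrow> (real^'n) list \<Rightarrow> (real^'n) set" where
  "CG_list K [] = K"
| "CG_list K (a # as) = CG_list (CG K a) as"

end

theory Submission
  imports Defs
begin

text \<open>Let \<open>H\<close> be the supporting hyperplane \<open>c x = d\<close> of \<open>K\<close> with \<open>d\<close> integral and \<open>F = K \<inter> H\<close>.
  On \<open>H\<close> the inequality \<open>(a + n c) x \<le> \<lfloor>m + n d\<rfloor>\<close> is just \<open>a x \<le> m\<close>, so one Chv\'atal-Gomory cut
  of \<open>K\<close> by \<open>a + n c\<close> restricts to the cut of \<open>F\<close> by \<open>a\<close> as soon as \<open>h\<^sub>K(a + n c)\<close> and \<open>h\<^sub>F(a) + n d\<close>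
  have the same floor. By compactness, the points of \<open>K\<close> with \<open>a x \<ge> \<lfloor>h\<^sub>F(a)\<rfloor> + 1\<close> stay a positive
  distance \<open>\<eta>\<close> below \<open>H\<close> in direction \<open>c\<close>, so any \<open>n\<close> with \<open>n \<eta> > h\<^sub>K(a) - \<lfloor>h\<^sub>F(a)\<rfloor> - 1\<close> works.
  The cut of \<open>K\<close> is again compact and lies below \<open>H\<close>, so the argument iterates along the list.\<close>

lemma compact_image_inner: "compact K \<Longrightarrow> compact ((\<lambda>x. a \<bullet> x) ` K)"
  by (intro compact_continuous_image) (auto intro!: continuous_intros)

lemma supp_fun_upper: "compact K \<Longrightarrow> x \<in> K \<Longrightarrow> a \<bullet> x \<le> supp_fun K a"
  unfolding supp_fun_def
  by (intro cSup_upper) (auto intro!: bounded_imp_bdd_above compact_imp_bounded compact_image_inner)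

lemma supp_fun_attained:
  assumes "compact K" and "K \<noteq> {}"
  obtains x where "x \<in> K" and "supp_fun K a = a \<bullet> x"
proof -
  obtain x where x: "x \<in> K" and max: "\<forall>y\<in>K. a \<bullet> y \<le> a \<bullet> x"
    using compact_attains_sup[OF compact_image_inner[OF assms(1)]] assms(2) by blast
  have "supp_fun K a = a \<bullet> x"
    unfolding supp_fun_def using x max by (intro cSup_eq_maximum) auto
  with x show thesis by (rule that)
qed

lemma CG_subset: "CG K a \<subseteq> K"
  unfolding CG_def by blast

lemma compact_CG: "compact K \<Longrightarrow> compact (CG K a)"
  unfolding CG_def by (intro compact_Int_closed closed_halfspace_le)

lemma CG_list_subset: "CG_list K as \<subseteq> K"
  by (induction as arbitrary: K) (auto dest: subsetD[OF CG_subset])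

lemma CG_list_empty: "CG_list {} as = {}"
  using CG_list_subset by blast

lemma face_margin:
  fixes K :: "(real^'n) set"
  assumes K: "compact K" and below: "\<forall>x\<in>K. c \<bullet> x \<le> d"
    and face: "\<forall>x\<in>K. c \<bullet> x = d \<longrightarrow> a \<bullet> x < t"
  obtains \<eta> where "\<eta> > 0" and "\<forall>x\<in>K. a \<bullet> x \<ge> t \<longrightarrow> c \<bullet> x \<le> d - \<eta>"
proof -
  define S where "S = K \<inter> {x. t \<le> a \<bullet> x}"
  have S: "compact S"
    unfolding S_def using closed_halfspace_ge[of t a] by (intro compact_Int_closed K) auto
  show thesis
  proof (cases "S = {}")
    case True
    then show thesis using that[of 1] unfolding S_def by auto
  next
    case False
    then obtain x0 where x0: "x0 \<in> S" and max: "\<forall>y\<in>S. c \<bullet> y \<le> c \<bullet> x0"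
      using compact_attains_sup[OF compact_image_inner[OF S]] by blast
    have "c \<bullet> x0 < d"
      using x0 below face unfolding S_def by force
    then show thesis
      using that[of "d - c \<bullet> x0"] max unfolding S_def by auto
  qed
qed

lemma exists_tilt_bound:
  fixes K :: "(real^'n) set"
  assumes K: "compact K" and below: "\<forall>x\<in>K. c \<bullet> x \<le> d"
    and face: "\<forall>x\<in>K. c \<bullet> x = d \<longrightarrow> a \<bullet> x < t"
  obtains n :: nat where "\<forall>x\<in>K. (a + of_nat n *\<^sub>R c) \<bullet> x < t + of_nat n * d"
proof -
  obtain \<eta> where \<eta>: "\<eta> > 0" "\<forall>x\<in>K. a \<bullet> x \<ge> t \<longrightarrow> c \<bullet> x \<le> d - \<eta>"
    using face_margin[OF K below face] .
  obtain n :: nat where "(supp_fun K a - t) / \<eta> < of_nat n"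
    using reals_Archimedean2 by blast
  then have n: "supp_fun K a - t < of_nat n * \<eta>"
    using \<eta>(1) by (simp add: field_simps)
  have "(a + of_nat n *\<^sub>R c) \<bullet> x < t + of_nat n * d" if x: "x \<in> K" for x
  proof (cases "a \<bullet> x \<ge> t")
    case True
    then have "of_nat n * (c \<bullet> x) \<le> of_nat n * (d - \<eta>)"
      using \<eta>(2) x by (intro mult_left_mono) auto
    then show ?thesis
      using supp_fun_upper[OF K x, of a] n by (simp add: inner_add_left algebra_simps)
  next
    case False
    moreover have "of_nat n * (c \<bullet> x) \<le> of_nat n * d"
      using below x by (intro mult_left_mono) auto
    ultimately show ?thesis by (simp add: inner_add_left)
  qed
  then show thesis using that by blast
qed

lemma CG_tilt_Int_hyperplane:
  fixes K :: "(real^'n) set" and c :: "real^'n" and d :: int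
  defines "H \<equiv> {x. c \<bullet> x = of_int d}"
  assumes K: "compact K" and below: "\<forall>x\<in>K. c \<bullet> x \<le> of_int d" and touch: "K \<inter> H \<noteq> {}"
  obtains n :: nat where "CG K (a + of_nat n *\<^sub>R c) \<inter> H = CG (K \<inter> H) a"
proof -
  define F where "F = K \<inter> H"
  have F: "compact F"
    unfolding F_def H_def by (intro compact_Int_closed K) (simp add: closed_hyperplane)
  define m where "m = \<lfloor>supp_fun F a\<rfloor>"
  have "\<forall>x\<in>K. c \<bullet> x = of_int d \<longrightarrow> a \<bullet> x < of_int m + 1"
    using supp_fun_upper[OF F] unfolding m_def F_def H_def by (fastforce intro: le_less_trans)
  then obtain n :: nat
    where n: "\<forall>x\<in>K. (a + of_nat n *\<^sub>R c) \<bullet> x < of_int m + 1 + of_nat n * of_int d"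
    using exists_tilt_bound[OF K below] by blast
  define b where "b = a + of_nat n *\<^sub>R c"
  obtain xf where xf: "xf \<in> F" "supp_fun F a = a \<bullet> xf"
    using supp_fun_attained[OF F] touch unfolding F_def by blast
  obtain xk where xk: "xk \<in> K" "supp_fun K b = b \<bullet> xk"
    using supp_fun_attained[OF K] touch by blast
  have "b \<bullet> xf = supp_fun F a + of_nat n * of_int d"
    using xf unfolding b_def F_def H_def by (simp add: inner_add_left)
  moreover have "b \<bullet> xf \<le> supp_fun K b"
    using supp_fun_upper[OF K] xf(1) unfolding F_def by blast
  moreover have "of_int m \<le> supp_fun F a"
    unfolding m_def by simp
  ultimately have floor_tilt: "\<lfloor>supp_fun K b\<rfloor> = m + int n * d"
    using n xk unfolding b_def by (subst floor_eq_iff) auto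
  have "b \<bullet> x \<le> of_int (m + int n * d) \<longleftrightarrow> a \<bullet> x \<le> of_int m" if "x \<in> H" for x
    using that unfolding b_def H_def by (simp add: inner_add_left)
  then have "CG K b \<inter> H = CG F a"
    unfolding CG_def floor_tilt F_def m_def by auto
  then show thesis
    using that unfolding b_def F_def by blast
qed

lemma CG_list_tilt_Int_hyperplane:
  fixes K :: "(real^'n) set" and c :: "real^'n" and d :: int
  defines "H \<equiv> {x. c \<bullet> x = of_int d}"
  assumes "compact K" and "\<forall>x\<in>K. c \<bullet> x \<le> of_int d"
  shows "\<exists>ns :: nat list. length ns = length as \<and>
     CG_list K (map2 (\<lambda>a m. a + of_nat m *\<^sub>R c) as ns) \<inter> H = CG_list (K \<inter> H) as"
  using assms(2,3)
proof (induction as arbitrary: K)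
  case Nil
  then show ?case by simp
next
  case (Cons a as)
  show ?case
  proof (cases "K \<inter> H = {}")
    case True
    let ?ns = "replicate (length (a # as)) 0"
    have "CG_list K (map2 (\<lambda>a m. a + of_nat m *\<^sub>R c) (a # as) ?ns) \<inter> H = {}"
      using CG_list_subset True by blast
    then show ?thesis
      using True by (intro exI[of _ ?ns]) (simp add: CG_list_empty del: CG_list.simps)
  next
    case False
    then obtain n :: nat where n: "CG K (a + of_nat n *\<^sub>R c) \<inter> H = CG (K \<inter> H) a"
      using CG_tilt_Int_hyperplane Cons.prems unfolding H_def by metis
    define K' where "K' = CG K (a + of_nat n *\<^sub>R c)"
    have "compact K'" "\<forall>x\<in>K'. c \<bullet> x \<le> of_int d"
      using compact_CG[OF Cons.prems(1)] CG_subset Cons.prems(2) unfolding K'_def by blast+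
    then obtain ns where "length ns = length as"
      "CG_list K' (map2 (\<lambda>a m. a + of_nat m *\<^sub>R c) as ns) \<inter> H = CG_list (K' \<inter> H) as"
      using Cons.IH by blast
    then show ?thesis
      using n by (intro exI[of _ "n # ns"]) (simp add: K'_def)
  qed
qed

text \<open>Only the integrality of \<open>h\<^sub>K(c)\<close> is used.\<close>

theorem lemma4p1:
  fixes K :: "(real^'n) set" and c :: "real^'n" and as :: "(real^'n) list"
  assumes "K \<noteq> {}" and "compact K"
    and "int_vec c" and "supp_fun K c \<in> \<int>"
    and "\<forall>a\<in>set as. int_vec a"
  shows "\<exists>ns :: nat list. length ns = length as \<and>
     CG_list K (map2 (\<lambda>a m. a + of_nat m *\<^sub>R c) as ns) \<inter> Heq K c
       = CG_list (face K c) as"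
proof -
  obtain d where d: "supp_fun K c = of_int d"
    using assms(4) Ints_cases by blast
  have "\<forall>x\<in>K. c \<bullet> x \<le> of_int d"
    using supp_fun_upper[OF assms(2)] d by metis
  from CG_list_tilt_Int_hyperplane[OF assms(2) this, of as] show ?thesis
    unfolding face_def Heq_def d by simp
qed

end
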